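(* Let $\mathfrak{m}_1,\dots,\mathfrak{m}_n$ be maximal ideals of $R$ and $M=R/\mathfrak{m}_1\oplus\cdots\oplus R/\mathfrak{m}_n$. Then $M$ satisfies the dual of proper strong Property $\mathcal{A}$ if and only if either $\mathrm{Max}(R)=\{\mathfrak{m}_1,\dots,\mathfrak{m}_n\}$ or $\mathfrak{m}_1=\mathfrak{m}_2=\cdots=\mathfrak{m}_n$.
   Context: All rings are commutative with identity; $\mathrm{Max}(R)$ is the set of maximal ideals of $R$. For an $R$-module $M$, $W_R(M)=\{r\in R : rM\neq M\}$. $M$ satisfies the dual of proper strong Property $\mathcal{A}$ if for every proper finitely generated ideal $I=\langle a_1,\dots,a_n\rangle$ of $R$ with $a_i\in W_R(M)$ for all $i$, we have $IM\neq M$. *)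

theory Defs
  imports Main
begin

definition is_ideal :: "'a::comm_ring_1 set \<Rightarrow> bool" where
  "is_ideal I \<longleftrightarrow> 0 \<in> I \<and> (\<forall>x\<in>I. \<forall>y\<in>I. x + y \<in> I) \<and> (\<forall>r. \<forall>x\<in>I. r * x \<in> I)"

definition maximal_ideal :: "'a::comm_ring_1 set \<Rightarrow> bool" where
  "maximal_ideal m \<longleftrightarrow> is_ideal m \<and> m \<noteq> UNIV \<and>
     (\<forall>J. is_ideal J \<and> m \<subseteq> J \<longrightarrow> J = m \<or> J = UNIV)"

definition Max_spec :: "'a::comm_ring_1 set set" where
  "Max_spec = {m. maximal_ideal m}"

definition ideal_gen :: "'a::comm_ring_1 list \<Rightarrow> 'a set" where
  "ideal_gen as = {x. \<exists>c. x = (\<Sum>j<length as. c j * as ! j)}"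

text \<open>The module M = R/m_1 (+) ... (+) R/m_n, represented by representatives
  v :: nat => 'a (only components 1..n matter); two representatives denote
  the same element of M iff their differences lie in m_i for i = 1..n.\<close>

definition dsq_eq :: "(nat \<Rightarrow> 'a::comm_ring_1 set) \<Rightarrow> nat \<Rightarrow> (nat \<Rightarrow> 'a) \<Rightarrow> (nat \<Rightarrow> 'a) \<Rightarrow> bool" where
  "dsq_eq m n v w \<longleftrightarrow> (\<forall>i\<in>{1..n}. v i - w i \<in> m i)"

definition dsq_IM :: "'a::comm_ring_1 set \<Rightarrow> (nat \<Rightarrow> 'a) set" where
  "dsq_IM I = {u. \<exists>(k::nat) c xs. (\<forall>j<k. c j \<in> I) \<and> u = (\<lambda>i. \<Sum>j<k. c j * xs j i)}"

definition dsq_IM_ne :: "(nat \<Rightarrow> 'a::comm_ring_1 set) \<Rightarrow> nat \<Rightarrow> 'a set \<Rightarrow> bool" where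
  "dsq_IM_ne m n I \<longleftrightarrow> (\<exists>w. \<forall>u\<in>dsq_IM I. \<not> dsq_eq m n u w)"

text \<open>W_R(M) = {r. rM \<noteq> M}.\<close>

definition dsq_W :: "(nat \<Rightarrow> 'a::comm_ring_1 set) \<Rightarrow> nat \<Rightarrow> 'a set" where
  "dsq_W m n = {r. \<exists>w. \<forall>v. \<not> dsq_eq m n (\<lambda>i. r * v i) w}"

definition dsq_dual_pspA :: "(nat \<Rightarrow> 'a::comm_ring_1 set) \<Rightarrow> nat \<Rightarrow> bool" where
  "dsq_dual_pspA m n \<longleftrightarrow>
     (\<forall>as. set as \<subseteq> dsq_W m n \<and> ideal_gen as \<noteq> UNIV \<longrightarrow> dsq_IM_ne m n (ideal_gen as))"

end

theory Submission
  imports Defs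
begin

text \<open>For M = R/m_1 (+) ... (+) R/m_n, an element r acts surjectively on M iff it avoids every
  m_i, so W(M) is the union of the m_i; and for an ideal I, IM = M iff I lies in no m_i (by the
  Chinese remainder argument). So M has the dual property iff every proper finitely generated
  ideal with generators in the union of the m_i lies in a single m_i. This holds if the m_i
  exhaust Max(R), since a proper ideal lies in a maximal one, and trivially if all m_i coincide.
  Otherwise take a maximal ideal p outside the list and two distinct m_j: since maximal ideals
  are prime, for each i there is y_i in p and in some m_j \<noteq> m_i but not in m_i, and the ideal
  generated by the y_i is proper (it lies in p) yet contained in no m_i.\<close>

lemma is_ideal_sum: "is_ideal I \<Longrightarrow> (\<And>j. j \<in> A \<Longrightarrow> f j \<in> I) \<Longrightarrow> sum f A \<in> I"
  by (induction A rule: infinite_finite_induct) (auto simp: is_ideal_def)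

lemma is_ideal_mult_left: "is_ideal I \<Longrightarrow> x \<in> I \<Longrightarrow> r * x \<in> I"
  by (simp add: is_ideal_def)

lemma is_ideal_mult_right: "is_ideal I \<Longrightarrow> x \<in> I \<Longrightarrow> x * r \<in> I"
  by (metis is_ideal_mult_left mult.commute)

lemma is_ideal_diff:
  assumes "is_ideal I" "x \<in> I" "y \<in> I"
  shows "x - y \<in> I"
proof -
  have "(-1) * y \<in> I" using assms(1,3) by (rule is_ideal_mult_left)
  then show ?thesis using assms(1,2) unfolding is_ideal_def by (metis mult_minus1 diff_conv_add_uminus)
qed

lemma is_ideal_eq_UNIV_iff: "is_ideal I \<Longrightarrow> I = UNIV \<longleftrightarrow> 1 \<in> I"
  using is_ideal_mult_left[of I 1] by auto

lemma maximal_ideal_is_ideal: "maximal_ideal m \<Longrightarrow> is_ideal m"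
  by (simp add: maximal_ideal_def)

lemma maximal_ideal_one_notin: "maximal_ideal m \<Longrightarrow> 1 \<notin> m"
  using is_ideal_eq_UNIV_iff by (auto simp: maximal_ideal_def)

lemma maximal_ideal_subset_imp_eq:
  "maximal_ideal p \<Longrightarrow> maximal_ideal q \<Longrightarrow> p \<subseteq> q \<Longrightarrow> p = q"
  by (auto simp: maximal_ideal_def)

lemma maximal_ideal_inverse_mod:
  assumes "maximal_ideal m" "x \<notin> m"
  shows "\<exists>s. x * s - 1 \<in> m"
proof -
  define J where "J = {a + s * x | a s. a \<in> m}"
  have m: "is_ideal m" using assms(1) by (rule maximal_ideal_is_ideal)
  then have zero: "0 \<in> m" by (simp add: is_ideal_def)
  have J_memI: "a + s * x \<in> J" if "a \<in> m" for a s
    unfolding J_def using that by blast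
  have "is_ideal J"
    unfolding is_ideal_def
  proof (intro conjI ballI allI)
    show "0 \<in> J" using J_memI[OF zero, of 0] by simp
  next
    fix u v assume "u \<in> J" "v \<in> J"
    then obtain a s b t where "u = a + s * x" "v = b + t * x" "a \<in> m" "b \<in> m"
      unfolding J_def by blast
    moreover have "a + b \<in> m" using m \<open>a \<in> m\<close> \<open>b \<in> m\<close> by (simp add: is_ideal_def)
    ultimately show "u + v \<in> J"
      using J_memI[of "a + b" "s + t"] by (simp add: algebra_simps)
  next
    fix r u assume "u \<in> J"
    then obtain a s where "u = a + s * x" "a \<in> m" unfolding J_def by blast
    moreover have "r * a \<in> m" using m \<open>a \<in> m\<close> by (rule is_ideal_mult_left)
    ultimately show "r * u \<in> J"
      using J_memI[of "r * a" "r * s"] by (simp add: algebra_simps)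
  qed
  moreover have "m \<subseteq> J" using J_memI[of _ 0] by auto
  moreover have "x \<notin> m" "x \<in> J" using assms(2) J_memI[OF zero, of 1] by simp_all
  ultimately have "J = UNIV"
    using assms(1) unfolding maximal_ideal_def by blast
  then obtain a s where one: "1 = a + s * x" and "a \<in> m" unfolding J_def by blast
  have "x * s - 1 = (-1) * a" using one by (simp add: algebra_simps)
  moreover have "(-1) * a \<in> m" using m \<open>a \<in> m\<close> by (rule is_ideal_mult_left)
  ultimately show ?thesis by metis
qed

lemma maximal_ideal_prime:
  assumes "maximal_ideal m" "x * y \<in> m" "x \<notin> m"
  shows "y \<in> m"
proof -
  have m: "is_ideal m" using assms(1) by (rule maximal_ideal_is_ideal)
  obtain s where s: "x * s - 1 \<in> m" using maximal_ideal_inverse_mod assms by blast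
  have "y = s * (x * y) - y * (x * s - 1)" by (simp add: algebra_simps)
  also have "\<dots> \<in> m"
    using is_ideal_diff[OF m is_ideal_mult_left[OF m assms(2)] is_ideal_mult_left[OF m s]] .
  finally show ?thesis .
qed

lemma maximal_ideals_avoid:
  assumes "maximal_ideal p" "maximal_ideal q" "maximal_ideal r" "p \<noteq> r" "q \<noteq> r"
  shows "\<exists>y. y \<in> p \<and> y \<in> q \<and> y \<notin> r"
proof -
  obtain x where "x \<in> p" "x \<notin> r" using assms(1,3,4) maximal_ideal_subset_imp_eq by blast
  obtain z where "z \<in> q" "z \<notin> r" using assms(2,3,5) maximal_ideal_subset_imp_eq by blast
  have "x * z \<in> p" using maximal_ideal_is_ideal[OF assms(1)] \<open>x \<in> p\<close> by (rule is_ideal_mult_right)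
  moreover have "x * z \<in> q" using maximal_ideal_is_ideal[OF assms(2)] \<open>z \<in> q\<close> by (rule is_ideal_mult_left)
  moreover have "x * z \<notin> r" using maximal_ideal_prime[OF assms(3)] \<open>x \<notin> r\<close> \<open>z \<notin> r\<close> by blast
  ultimately show ?thesis by blast
qed

lemma is_ideal_Union_chain:
  assumes "C \<noteq> {}" "\<And>J. J \<in> C \<Longrightarrow> is_ideal J" "\<And>J K. J \<in> C \<Longrightarrow> K \<in> C \<Longrightarrow> J \<subseteq> K \<or> K \<subseteq> J"
  shows "is_ideal (\<Union>C)"
  unfolding is_ideal_def
proof (intro conjI ballI allI)
  show "0 \<in> \<Union>C" using assms(1,2) by (auto simp: is_ideal_def)
next
  fix x y assume "x \<in> \<Union>C" "y \<in> \<Union>C"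
  then obtain J where "J \<in> C" "x \<in> J" "y \<in> J" using assms(3) by blast
  then show "x + y \<in> \<Union>C" using assms(2) by (auto simp: is_ideal_def)
next
  fix r x assume "x \<in> \<Union>C"
  then obtain J where "J \<in> C" "x \<in> J" by blast
  then show "r * x \<in> \<Union>C" using assms(2) is_ideal_mult_left by blast
qed

lemma exists_maximal_ideal_superset:
  fixes I :: "'a::comm_ring_1 set"
  assumes "is_ideal I" "I \<noteq> UNIV"
  shows "\<exists>q. maximal_ideal q \<and> I \<subseteq> q"
proof -
  let ?A = "{J. is_ideal J \<and> I \<subseteq> J \<and> (1::'a) \<notin> J}"
  have "\<exists>M\<in>?A. \<forall>J\<in>?A. M \<subseteq> J \<longrightarrow> J = M"
  proof (rule subset_Zorn_nonempty)
    show "?A \<noteq> {}" using assms is_ideal_eq_UNIV_iff by blast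
  next
    fix C assume "C \<noteq> {}" "subset.chain ?A C"
    then show "\<Union>C \<in> ?A"
      using is_ideal_Union_chain[of C] by (auto simp: subset.chain_def)
  qed
  then obtain M where "M \<in> ?A" "\<forall>J\<in>?A. M \<subseteq> J \<longrightarrow> J = M" ..
  then have "maximal_ideal M"
    unfolding maximal_ideal_def using is_ideal_eq_UNIV_iff by blast
  with \<open>M \<in> ?A\<close> show ?thesis by blast
qed

lemma is_ideal_ideal_gen: "is_ideal (ideal_gen as)"
  unfolding is_ideal_def ideal_gen_def
proof (intro conjI ballI allI)
  show "0 \<in> {x. \<exists>c. x = (\<Sum>j<length as. c j * as ! j)}"
    by (auto intro: exI[of _ "\<lambda>_. 0"])
next
  fix x y
  assume "x \<in> {x. \<exists>c. x = (\<Sum>j<length as. c j * as ! j)}"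
    "y \<in> {x. \<exists>c. x = (\<Sum>j<length as. c j * as ! j)}"
  then obtain c d where "x = (\<Sum>j<length as. c j * as ! j)" "y = (\<Sum>j<length as. d j * as ! j)"
    by blast
  then show "x + y \<in> {x. \<exists>c. x = (\<Sum>j<length as. c j * as ! j)}"
    by (auto simp: sum.distrib[symmetric] distrib_right intro!: exI[of _ "\<lambda>j. c j + d j"])
next
  fix r x assume "x \<in> {x. \<exists>c. x = (\<Sum>j<length as. c j * as ! j)}"
  then obtain c where "x = (\<Sum>j<length as. c j * as ! j)" by blast
  then show "r * x \<in> {x. \<exists>c. x = (\<Sum>j<length as. c j * as ! j)}"
    by (auto simp: sum_distrib_left mult.assoc intro!: exI[of _ "\<lambda>j. r * c j"])
qed

lemma ideal_gen_base: "x \<in> set as \<Longrightarrow> x \<in> ideal_gen as"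
proof -
  assume "x \<in> set as"
  then obtain k where k: "k < length as" "as ! k = x" by (meson in_set_conv_nth)
  have "(\<Sum>j<length as. (if j = k then 1 else 0) * as ! j) = (\<Sum>j<length as. if j = k then x else 0)"
    using k by (intro sum.cong) auto
  also have "\<dots> = x" using k by simp
  finally show ?thesis
    unfolding ideal_gen_def by (auto intro!: exI[of _ "\<lambda>j. if j = k then 1 else 0"])
qed

lemma ideal_gen_least: "is_ideal J \<Longrightarrow> set as \<subseteq> J \<Longrightarrow> ideal_gen as \<subseteq> J"
  unfolding ideal_gen_def by (auto intro!: is_ideal_sum is_ideal_mult_left)

lemma dsq_W_iff:
  assumes "\<forall>i\<in>{1..n}. maximal_ideal (m i)"
  shows "r \<in> dsq_W m n \<longleftrightarrow> (\<exists>j\<in>{1..n}. r \<in> m j)"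
proof
  assume "\<exists>j\<in>{1..n}. r \<in> m j"
  then obtain j where j: "j \<in> {1..n}" "r \<in> m j" ..
  have mj: "maximal_ideal (m j)" using assms j(1) by blast
  have "\<not> dsq_eq m n (\<lambda>i. r * v i) (\<lambda>i. 1)" for v
  proof
    assume "dsq_eq m n (\<lambda>i. r * v i) (\<lambda>i. 1)"
    then have "r * v j - 1 \<in> m j" using j(1) by (simp add: dsq_eq_def)
    then have "r * v j - (r * v j - 1) \<in> m j"
      using is_ideal_diff is_ideal_mult_right j(2) maximal_ideal_is_ideal[OF mj] by blast
    then show False using maximal_ideal_one_notin[OF mj] by simp
  qed
  then show "r \<in> dsq_W m n" unfolding dsq_W_def by blast
next
  assume "r \<in> dsq_W m n"
  then obtain w where w: "\<And>v. \<not> dsq_eq m n (\<lambda>i. r * v i) w" unfolding dsq_W_def by blast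
  show "\<exists>j\<in>{1..n}. r \<in> m j"
  proof (rule ccontr)
    assume "\<not> ?thesis"
    then have "\<forall>i\<in>{1..n}. \<exists>s. r * s - 1 \<in> m i"
      using assms maximal_ideal_inverse_mod by blast
    then obtain s where s: "\<forall>i\<in>{1..n}. r * s i - 1 \<in> m i" by metis
    have "dsq_eq m n (\<lambda>i. r * (s i * w i)) w"
      unfolding dsq_eq_def
    proof
      fix i assume i: "i \<in> {1..n}"
      have "r * (s i * w i) - w i = (r * s i - 1) * w i" by (simp add: algebra_simps)
      then show "r * (s i * w i) - w i \<in> m i"
        using is_ideal_mult_right maximal_ideal_is_ideal assms s i by metis
    qed
    then show False using w[of "\<lambda>i. s i * w i"] by simp
  qed
qed

lemma dsq_IM_ne_iff:
  assumes "\<forall>i\<in>{1..n}. maximal_ideal (m i)" "is_ideal I"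
  shows "dsq_IM_ne m n I \<longleftrightarrow> (\<exists>k\<in>{1..n}. I \<subseteq> m k)"
proof
  assume "\<exists>k\<in>{1..n}. I \<subseteq> m k"
  then obtain k where k: "k \<in> {1..n}" "I \<subseteq> m k" ..
  have mk: "maximal_ideal (m k)" using assms(1) k(1) by blast
  have mk_ideal: "is_ideal (m k)" using mk by (rule maximal_ideal_is_ideal)
  have "\<not> dsq_eq m n u (\<lambda>i. 1)" if u: "u \<in> dsq_IM I" for u
  proof
    assume "dsq_eq m n u (\<lambda>i. 1)"
    then have "u k - 1 \<in> m k" using k(1) by (simp add: dsq_eq_def)
    moreover have "u k \<in> m k"
    proof -
      obtain K :: nat and c xs where "\<forall>j<K. c j \<in> I" "u = (\<lambda>i. \<Sum>j<K. c j * xs j i)"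
        using u unfolding dsq_IM_def by blast
      then show ?thesis
        using k(2) by (auto intro!: is_ideal_sum[OF mk_ideal] is_ideal_mult_right[OF mk_ideal])
    qed
    ultimately have "u k - (u k - 1) \<in> m k" using is_ideal_diff[OF mk_ideal] by blast
    then show False using maximal_ideal_one_notin[OF mk] by simp
  qed
  then show "dsq_IM_ne m n I" unfolding dsq_IM_ne_def by blast
next
  assume "dsq_IM_ne m n I"
  then obtain w where w: "\<And>u. u \<in> dsq_IM I \<Longrightarrow> \<not> dsq_eq m n u w"
    unfolding dsq_IM_ne_def by blast
  show "\<exists>k\<in>{1..n}. I \<subseteq> m k"
  proof (rule ccontr)
    assume "\<not> ?thesis"
    then have "\<forall>i\<in>{1..n}. \<exists>a s. a \<in> I \<and> a * s - 1 \<in> m i"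
      using assms(1) maximal_ideal_inverse_mod by (metis subsetI)
    then obtain a s where as: "\<forall>i\<in>{1..n}. a i \<in> I \<and> a i * s i - 1 \<in> m i" by metis
    \<comment> \<open>the element \<open>\<Sum>\<^sub>i a\<^sub>i \<cdot> s\<^sub>i w\<^sub>i e\<^sub>i\<close> of IM agrees with \<open>w\<close>\<close>
    define c where "c j = (if j \<in> {1..n} then a j else 0)" for j
    define xs where "xs j i = (if i = j then s j * w i else 0)" for j i
    define u where "u i = (\<Sum>j<Suc n. c j * xs j i)" for i
    have "u \<in> dsq_IM I"
      using as assms(2) unfolding dsq_IM_def u_def
      by (intro CollectI exI[of _ "Suc n"] exI[of _ c] exI[of _ xs] conjI)
        (auto simp: c_def is_ideal_def)
    moreover have "dsq_eq m n u w"
      unfolding dsq_eq_def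
    proof
      fix i assume i: "i \<in> {1..n}"
      have "u i = (\<Sum>j<Suc n. if j = i then c i * (s i * w i) else 0)"
        unfolding u_def xs_def by (intro sum.cong) auto
      also have "\<dots> = a i * (s i * w i)" using i by (simp add: c_def)
      finally have "u i - w i = (a i * s i - 1) * w i" by (simp add: algebra_simps)
      then show "u i - w i \<in> m i"
        using is_ideal_mult_right maximal_ideal_is_ideal assms(1) as i by metis
    qed
    ultimately show False using w by blast
  qed
qed

lemma dsq_dual_pspA_iff:
  assumes "\<forall>i\<in>{1..n}. maximal_ideal (m i)"
  shows "dsq_dual_pspA m n \<longleftrightarrow>
    (\<forall>as. set as \<subseteq> \<Union>(m ` {1..n}) \<and> ideal_gen as \<noteq> UNIV \<longrightarrow> (\<exists>k\<in>{1..n}. ideal_gen as \<subseteq> m k))"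
proof -
  have "set as \<subseteq> dsq_W m n \<longleftrightarrow> set as \<subseteq> \<Union>(m ` {1..n})" for as
    using dsq_W_iff[OF assms] by blast
  then show ?thesis
    unfolding dsq_dual_pspA_def using dsq_IM_ne_iff[OF assms is_ideal_ideal_gen] by simp
qed

lemma not_dsq_dual_pspA:
  assumes "\<forall>i\<in>{1..n}. maximal_ideal (m i)" "maximal_ideal p" "p \<notin> m ` {1..n}"
    and "a \<in> {1..n}" "b \<in> {1..n}" "m a \<noteq> m b"
  shows "\<not> dsq_dual_pspA m n"
proof -
  have "\<forall>i\<in>{1..n}. \<exists>y. y \<in> p \<and> (\<exists>j\<in>{1..n}. y \<in> m j) \<and> y \<notin> m i"
  proof
    fix i assume i: "i \<in> {1..n}"
    have "m a \<noteq> m i \<or> m b \<noteq> m i" using assms(6) by auto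
    then obtain j where j: "j \<in> {1..n}" "m j \<noteq> m i" using assms(4,5) by blast
    have "p \<noteq> m i" using assms(3) i by blast
    then obtain y where "y \<in> p" "y \<in> m j" "y \<notin> m i"
      using maximal_ideals_avoid[of p "m j" "m i"] assms(1,2) i j by blast
    with j show "\<exists>y. y \<in> p \<and> (\<exists>j\<in>{1..n}. y \<in> m j) \<and> y \<notin> m i" by blast
  qed
  then obtain y where y: "\<forall>i\<in>{1..n}. y i \<in> p \<and> (\<exists>j\<in>{1..n}. y i \<in> m j) \<and> y i \<notin> m i"
    by (rule bchoice[THEN exE])
  define as where "as = map y [1..<Suc n]"
  have set_as: "set as = y ` {1..n}" unfolding as_def by auto
  have "set as \<subseteq> p" using y set_as by auto
  then have "ideal_gen as \<subseteq> p" by (rule ideal_gen_least[OF maximal_ideal_is_ideal[OF assms(2)]])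
  then have "ideal_gen as \<noteq> UNIV" using maximal_ideal_one_notin[OF assms(2)] by blast
  moreover have "\<not> ideal_gen as \<subseteq> m k" if k: "k \<in> {1..n}" for k
  proof -
    have "y k \<in> ideal_gen as" using k set_as by (intro ideal_gen_base) simp
    then show ?thesis using k y by blast
  qed
  moreover have "set as \<subseteq> \<Union>(m ` {1..n})" unfolding set_as using y by fast
  ultimately have "\<not> (set as \<subseteq> \<Union>(m ` {1..n}) \<and> ideal_gen as \<noteq> UNIV \<longrightarrow>
      (\<exists>k\<in>{1..n}. ideal_gen as \<subseteq> m k))"
    by blast
  then show ?thesis unfolding dsq_dual_pspA_iff[OF assms(1)] by blast
qed

lemma dsq_dual_pspA_if_Max_spec_eq:
  assumes "\<forall>i\<in>{1..n}. maximal_ideal (m i)" "Max_spec = m ` {1..n}"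
  shows "dsq_dual_pspA m n"
  unfolding dsq_dual_pspA_iff[OF assms(1)]
proof (intro allI impI, elim conjE)
  fix as :: "'a list" assume "ideal_gen as \<noteq> UNIV"
  then obtain q where "maximal_ideal q" "ideal_gen as \<subseteq> q"
    using exists_maximal_ideal_superset[OF is_ideal_ideal_gen] by blast
  moreover from this(1) have "q \<in> m ` {1..n}" unfolding assms(2)[symmetric] Max_spec_def by simp
  ultimately show "\<exists>k\<in>{1..n}. ideal_gen as \<subseteq> m k" by blast
qed

lemma dsq_dual_pspA_if_const:
  assumes "\<forall>i\<in>{1..n}. maximal_ideal (m i)" "\<forall>i\<in>{1..n}. \<forall>j\<in>{1..n}. m i = m j" "n \<ge> 1"
  shows "dsq_dual_pspA m n"
  unfolding dsq_dual_pspA_iff[OF assms(1)]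
proof (intro allI impI, elim conjE)
  fix as :: "'a list" assume gen: "set as \<subseteq> \<Union>(m ` {1..n})"
  have one: "1 \<in> {1..n}" using assms(3) by simp
  then have "\<Union>(m ` {1..n}) \<subseteq> m 1" using assms(2) by blast
  with gen have "set as \<subseteq> m 1" by (rule order_trans)
  moreover have "is_ideal (m 1)" using assms(1) one by (simp add: maximal_ideal_is_ideal)
  ultimately have "ideal_gen as \<subseteq> m 1" by (intro ideal_gen_least)
  with one show "\<exists>k\<in>{1..n}. ideal_gen as \<subseteq> m k" ..
qed

theorem theorem3p13:
  fixes m :: "nat \<Rightarrow> 'a::comm_ring_1 set" and n :: nat
  assumes "n \<ge> 1"
    and "\<forall>i\<in>{1..n}. maximal_ideal (m i)"
  shows "dsq_dual_pspA m n \<longleftrightarrow>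
           (Max_spec = m ` {1..n} \<or> (\<forall>i\<in>{1..n}. \<forall>j\<in>{1..n}. m i = m j))"
proof
  assume dual: "dsq_dual_pspA m n"
  have "m ` {1..n} \<subseteq> Max_spec" using assms(2) unfolding Max_spec_def by blast
  show "Max_spec = m ` {1..n} \<or> (\<forall>i\<in>{1..n}. \<forall>j\<in>{1..n}. m i = m j)"
  proof (rule ccontr)
    assume "\<not> ?thesis"
    then obtain p a b where "p \<in> Max_spec" "p \<notin> m ` {1..n}" "a \<in> {1..n}" "b \<in> {1..n}" "m a \<noteq> m b"
      using \<open>m ` {1..n} \<subseteq> Max_spec\<close> by blast
    then show False using not_dsq_dual_pspA[OF assms(2)] dual by (simp add: Max_spec_def)
  qed
next
  assume "Max_spec = m ` {1..n} \<or> (\<forall>i\<in>{1..n}. \<forall>j\<in>{1..n}. m i = m j)"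
  then show "dsq_dual_pspA m n"
  proof
    assume "Max_spec = m ` {1..n}"
    then show ?thesis by (rule dsq_dual_pspA_if_Max_spec_eq[OF assms(2)])
  next
    assume "\<forall>i\<in>{1..n}. \<forall>j\<in>{1..n}. m i = m j"
    then show ?thesis by (rule dsq_dual_pspA_if_const[OF assms(2) _ assms(1)])
  qed
qed

end
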